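(* Fix integers $N\ge1$, $K\ge1$, and for each $k\in\{1,\dots,K\}$ parameters $\theta_k>0$, $a_k>0$, $\rho_k\in[0,1]$; let $\sigma_v,\sigma_u,\sigma_\eta,\sigma_\nu>0$ and $\bar\rho=K^{-1}\sum_k\rho_k$. For $\phi\in[0,1]$ let $\lambda(\phi)=\frac{\sigma_v}{2\sigma_u}\big(1+\phi^2\bar\rho^2\sigma_\eta^2/\sigma_v^2\big)^{-1/2}$ and $\delta_k(\phi)=N\phi a_k\rho_k/\lambda(\phi)$. Define the cross-sectional dispersion of AI fund returns $$D(\phi)=\sqrt{\sum_{k=1}^K\frac{(1-\rho_k^2)\sigma_\nu^2a_k^2}{\left[\theta_k+\delta_k(\phi)\right]^2}}.$$ Then $D(\phi)$ is monotonically decreasing in $\phi$, and in the monoculture limit ($\phi\to1$ and $\rho_k\to1$ for all $k$), $D\to 0$.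
   Context: In the model, $D(\phi)$ is the paper's expression for $\sqrt{\operatorname{Var}_i[\sum_k\alpha_{i,k}(\phi)]}$, the cross-sectional standard deviation over AI investors $i$ of their total alpha; $\sigma_\nu^2$ is the variance of the idiosyncratic noise in AI signals, $\rho_k$ the algorithmic homogeneity of signal $k$, $a_k$ the aggressiveness parameter, $\theta_k$ the natural mean-reversion rate of signal $k$, $\phi$ the AI adoption rate among $N$ investors, $\sigma_u^2$ noise-trader variance, $\sigma_v$ fundamental volatility, $\sigma_\eta^2$ common AI noise variance. *)

theory Defs
  imports "HOL-Analysis.Analysis"
begin

text \<open>Signals k range over a finite index type 'k, so K = CARD('k) \<ge> 1.
  Per-signal parameters are vectors in real^'k.\<close>

definition rho_bar :: "real^'k::finite \<Rightarrow> real" where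
  "rho_bar \<rho> = (\<Sum>k\<in>UNIV. \<rho> $ k) / real CARD('k)"

definition lam :: "real \<Rightarrow> real \<Rightarrow> real \<Rightarrow> real^'k::finite \<Rightarrow> real \<Rightarrow> real" where
  "lam \<sigma>v \<sigma>u \<sigma>\<eta> \<rho> \<phi> =
     \<sigma>v / (2 * \<sigma>u) * (1 + \<phi>^2 * (rho_bar \<rho>)^2 * \<sigma>\<eta>^2 / \<sigma>v^2) powr (-1/2)"

definition delta :: "nat \<Rightarrow> real^'k::finite \<Rightarrow> real \<Rightarrow> real \<Rightarrow> real \<Rightarrow> real^'k \<Rightarrow> real \<Rightarrow> 'k \<Rightarrow> real" where
  "delta N a \<sigma>v \<sigma>u \<sigma>\<eta> \<rho> \<phi> k =
     real N * \<phi> * (a $ k) * (\<rho> $ k) / lam \<sigma>v \<sigma>u \<sigma>\<eta> \<rho> \<phi>"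

definition Disp :: "nat \<Rightarrow> real^'k::finite \<Rightarrow> real^'k \<Rightarrow> real \<Rightarrow> real \<Rightarrow> real \<Rightarrow> real \<Rightarrow> real^'k \<Rightarrow> real \<Rightarrow> real" where
  "Disp N \<theta> a \<sigma>v \<sigma>u \<sigma>\<eta> \<sigma>\<nu> \<rho> \<phi> =
     sqrt (\<Sum>k\<in>UNIV. (1 - (\<rho> $ k)^2) * \<sigma>\<nu>^2 * (a $ k)^2
                      / ((\<theta> $ k) + delta N a \<sigma>v \<sigma>u \<sigma>\<eta> \<rho> \<phi> k)^2)"

end

theory Submission
  imports Defs
begin

text \<open>Since the price impact \<open>\<lambda>(\<phi>)\<close> is positive and decreasing, every
  feedback term \<open>\<delta>\<^sub>k(\<phi>)\<close> is nonnegative and increasing, so the dispersion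
  decreases in \<open>\<phi>\<close>. In particular it is squeezed between \<open>0\<close> and its value at
  \<open>\<phi> = 0\<close>, which depends continuously on \<open>\<rho>\<close> and vanishes at full homogeneity
  \<open>\<rho> = 1\<close>, because then all numerators \<open>(1 - \<rho>\<^sub>k\<^sup>2) \<sigma>\<^sub>\<nu>\<^sup>2 a\<^sub>k\<^sup>2\<close> vanish.\<close>

lemma lam_pos:
  assumes "\<sigma>v > 0" "\<sigma>u > 0"
  shows "lam \<sigma>v \<sigma>u \<sigma>\<eta> \<rho> \<phi> > 0"
proof -
  have "1 + \<phi>^2 * (rho_bar \<rho>)^2 * \<sigma>\<eta>^2 / \<sigma>v^2 > 0"
    by (simp add: add_pos_nonneg)
  then show ?thesis
    unfolding lam_def using assms by simp
qed

lemma lam_antimono: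
  assumes "\<sigma>v > 0" "\<sigma>u > 0" "0 \<le> \<phi>1" "\<phi>1 \<le> \<phi>2"
  shows "lam \<sigma>v \<sigma>u \<sigma>\<eta> \<rho> \<phi>2 \<le> lam \<sigma>v \<sigma>u \<sigma>\<eta> \<rho> \<phi>1"
proof -
  define c where "c = (rho_bar \<rho>)^2 * \<sigma>\<eta>^2 / \<sigma>v^2"
  have c_nonneg: "c \<ge> 0"
    by (simp add: c_def)
  have lam_eq: "lam \<sigma>v \<sigma>u \<sigma>\<eta> \<rho> \<phi> = \<sigma>v / (2 * \<sigma>u) * (1 + \<phi>^2 * c) powr (-1/2)" for \<phi>
    by (simp add: lam_def c_def mult.assoc)
  have "\<phi>1^2 * c \<le> \<phi>2^2 * c"
    using assms c_nonneg by (intro mult_right_mono power_mono) auto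
  then have "(1 + \<phi>2^2 * c) powr (-1/2) \<le> (1 + \<phi>1^2 * c) powr (-1/2)"
    using c_nonneg by (intro powr_mono2') (auto simp: add_pos_nonneg)
  then show ?thesis
    unfolding lam_eq using assms by (intro mult_left_mono) auto
qed

lemma delta_nonneg:
  assumes "\<sigma>v > 0" "\<sigma>u > 0" "0 \<le> \<phi>" "a $ k \<ge> 0" "\<rho> $ k \<ge> 0"
  shows "delta N a \<sigma>v \<sigma>u \<sigma>\<eta> \<rho> \<phi> k \<ge> 0"
  unfolding delta_def using assms lam_pos[OF assms(1,2), of \<sigma>\<eta> \<rho> \<phi>]
  by (intro divide_nonneg_pos) auto

lemma delta_mono:
  assumes "\<sigma>v > 0" "\<sigma>u > 0" "0 \<le> \<phi>1" "\<phi>1 \<le> \<phi>2" "a $ k \<ge> 0" "\<rho> $ k \<ge> 0"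
  shows "delta N a \<sigma>v \<sigma>u \<sigma>\<eta> \<rho> \<phi>1 k \<le> delta N a \<sigma>v \<sigma>u \<sigma>\<eta> \<rho> \<phi>2 k"
  unfolding delta_def
proof (rule frac_le)
  show "real N * \<phi>1 * a $ k * \<rho> $ k \<le> real N * \<phi>2 * a $ k * \<rho> $ k"
    using assms by (intro mult_right_mono mult_left_mono) auto
qed (use assms lam_pos lam_antimono in auto)

lemma delta_zero_adoption [simp]: "delta N a \<sigma>v \<sigma>u \<sigma>\<eta> \<rho> 0 k = 0"
  by (simp add: delta_def)

lemma Disp_nonneg:
  assumes "\<And>k. \<bar>\<rho> $ k\<bar> \<le> 1"
  shows "Disp N \<theta> a \<sigma>v \<sigma>u \<sigma>\<eta> \<sigma>\<nu> \<rho> \<phi> \<ge> 0"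
  unfolding Disp_def
  using assms by (intro real_sqrt_ge_zero sum_nonneg divide_nonneg_nonneg mult_nonneg_nonneg)
    (auto simp: abs_square_le_1)

lemma Disp_antimono:
  assumes "\<And>k. \<theta> $ k > 0" "\<And>k. a $ k \<ge> 0" "\<And>k. 0 \<le> \<rho> $ k \<and> \<rho> $ k \<le> 1"
    and "\<sigma>v > 0" "\<sigma>u > 0" "0 \<le> \<phi>1" "\<phi>1 \<le> \<phi>2"
  shows "Disp N \<theta> a \<sigma>v \<sigma>u \<sigma>\<eta> \<sigma>\<nu> \<rho> \<phi>2 \<le> Disp N \<theta> a \<sigma>v \<sigma>u \<sigma>\<eta> \<sigma>\<nu> \<rho> \<phi>1"
  unfolding Disp_def
proof (intro real_sqrt_le_mono sum_mono frac_le power_mono order.refl)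
  fix k
  have "\<rho> $ k ^ 2 \<le> 1"
    using assms(3)[of k] by (simp add: power_le_one)
  then show "0 \<le> (1 - (\<rho> $ k)^2) * \<sigma>\<nu>^2 * (a $ k)^2"
    by simp
  have "delta N a \<sigma>v \<sigma>u \<sigma>\<eta> \<rho> \<phi>1 k \<ge> 0"
    using assms by (intro delta_nonneg) auto
  then show "0 < (\<theta> $ k + delta N a \<sigma>v \<sigma>u \<sigma>\<eta> \<rho> \<phi>1 k)^2"
    and "0 \<le> \<theta> $ k + delta N a \<sigma>v \<sigma>u \<sigma>\<eta> \<rho> \<phi>1 k"
    using assms(1)[of k] by (auto simp: add_pos_nonneg)
  show "\<theta> $ k + delta N a \<sigma>v \<sigma>u \<sigma>\<eta> \<rho> \<phi>1 k \<le> \<theta> $ k + delta N a \<sigma>v \<sigma>u \<sigma>\<eta> \<rho> \<phi>2 k"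
    using assms by (auto intro: delta_mono)
qed

lemma isCont_Disp_zero_adoption:
  "isCont (\<lambda>r. Disp N \<theta> a \<sigma>v \<sigma>u \<sigma>\<eta> \<sigma>\<nu> r 0) \<rho>"
  unfolding Disp_def delta_zero_adoption divide_inverse by (intro continuous_intros)

lemma Disp_full_homogeneity: "Disp N \<theta> a \<sigma>v \<sigma>u \<sigma>\<eta> \<sigma>\<nu> (\<chi> k. 1) \<phi> = 0"
  by (simp add: Disp_def)

theorem corollary1:
  fixes N :: nat and \<theta> a \<rho> :: "real^'k::finite"
    and \<sigma>v \<sigma>u \<sigma>\<eta> \<sigma>\<nu> :: real
  assumes "N \<ge> 1"
    and "\<And>k. \<theta> $ k > 0" and "\<And>k. a $ k > 0"
    and "\<And>k. 0 \<le> \<rho> $ k \<and> \<rho> $ k \<le> 1"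
    and "\<sigma>v > 0" "\<sigma>u > 0" "\<sigma>\<eta> > 0" "\<sigma>\<nu> > 0"
  shows "(\<forall>\<phi>1 \<phi>2. 0 \<le> \<phi>1 \<longrightarrow> \<phi>1 \<le> \<phi>2 \<longrightarrow> \<phi>2 \<le> 1 \<longrightarrow>
            Disp N \<theta> a \<sigma>v \<sigma>u \<sigma>\<eta> \<sigma>\<nu> \<rho> \<phi>2 \<le> Disp N \<theta> a \<sigma>v \<sigma>u \<sigma>\<eta> \<sigma>\<nu> \<rho> \<phi>1)
       \<and> ((\<lambda>(\<phi>, r). Disp N \<theta> a \<sigma>v \<sigma>u \<sigma>\<eta> \<sigma>\<nu> r \<phi>) \<longlongrightarrow> 0)
           (at (1, \<chi> k. 1) within ({0..1} \<times> {r. \<forall>k. 0 \<le> r $ k \<and> r $ k \<le> 1}))"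
proof
  have a_nonneg: "\<And>k. a $ k \<ge> 0"
    using assms(3) less_imp_le by blast
  show "\<forall>\<phi>1 \<phi>2. 0 \<le> \<phi>1 \<longrightarrow> \<phi>1 \<le> \<phi>2 \<longrightarrow> \<phi>2 \<le> 1 \<longrightarrow>
          Disp N \<theta> a \<sigma>v \<sigma>u \<sigma>\<eta> \<sigma>\<nu> \<rho> \<phi>2 \<le> Disp N \<theta> a \<sigma>v \<sigma>u \<sigma>\<eta> \<sigma>\<nu> \<rho> \<phi>1"
    using assms a_nonneg by (blast intro: Disp_antimono)
  let ?S = "{0..1::real} \<times> {r::real^'k. \<forall>k. 0 \<le> r $ k \<and> r $ k \<le> 1}"
  let ?F = "at (1::real, \<chi> k. 1) within ?S"
  let ?D = "\<lambda>\<phi> r. Disp N \<theta> a \<sigma>v \<sigma>u \<sigma>\<eta> \<sigma>\<nu> r \<phi>"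
  have "\<forall>\<^sub>F x in ?F. 0 \<le> ?D (fst x) (snd x)"
    unfolding eventually_at_filter
    by (auto intro!: always_eventually Disp_nonneg)
  moreover have "\<forall>\<^sub>F x in ?F. ?D (fst x) (snd x) \<le> ?D 0 (snd x)"
    unfolding eventually_at_filter
    using assms a_nonneg by (auto intro!: always_eventually Disp_antimono)
  moreover have "((\<lambda>x. ?D 0 (snd x)) \<longlongrightarrow> 0) ?F"
  proof -
    have "(snd \<longlongrightarrow> (\<chi> k. 1)) ?F"
      using tendsto_snd[OF tendsto_ident_at, of "(1::real, \<chi> k. 1)" ?S] by simp
    then have "((\<lambda>x. ?D 0 (snd x)) \<longlongrightarrow> ?D 0 (\<chi> k. 1)) ?F"
      by (rule isCont_tendsto_compose[OF isCont_Disp_zero_adoption])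
    then show ?thesis
      by (simp only: Disp_full_homogeneity)
  qed
  ultimately show "((\<lambda>(\<phi>, r). ?D \<phi> r) \<longlongrightarrow> 0) ?F"
    unfolding case_prod_unfold by (rule tendsto_sandwich[OF _ _ tendsto_const])
qed

end
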